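(* In the setting below, suppose $u(s,t,q)=l(s,t)U(q)$, $v(s,t,q)=m(s,t)V(q)$, $w(s,t,q)=n(s,t)W(q)$, $x(s,t,q)=p(s,t)X(q)$ with all factors of class $C^1$, and assume $U(q_0)=U'(q_0)=V(q_0)=V'(q_0)=0$. Then $\mathbf r$ is an isogeodesic of $\mathbf P$ at $(t_0,q_0)$ if and only if for all $s\in[L_1,L_2]$: $$n(s,t_0)W(q_0)=0,\qquad p(s,t_0)X(q_0)=0,$$ $$\frac{\partial n}{\partial t}(s,t_0)\,W(q_0)\,p(s,t_0)\,X'(q_0)-n(s,t_0)\,W'(q_0)\,\frac{\partial p}{\partial t}(s,t_0)\,X(q_0)\neq0.$$
   Context: $\mathbf r:[L_1,L_2]\to\mathbb R^4$ is an arc-length curve with Frenet frame $\{\mathbf T,\mathbf N,\mathbf B_1,\mathbf B_2\}$ (orthonormal, $\mathbf T=\mathbf r'$, $\mathbf T'=k_1\mathbf N$, $\mathbf N'=-k_1\mathbf T+k_2\mathbf B_1$, $\mathbf B_1'=-k_2\mathbf N+k_3\mathbf B_2$, $\mathbf B_2'=-k_3\mathbf B_1$, $k_1>0$), and $\mathbf P(s,t,q)=\mathbf r(s)+u\mathbf T(s)+v\mathbf N(s)+w\mathbf B_1(s)+x\mathbf B_2(s)$ on $[L_1,L_2]\times[T_1,T_2]\times[Q_1,Q_2]$, with $t_0\in[T_1,T_2]$, $q_0\in[Q_1,Q_2]$ fixed. "$\mathbf r$ is an isogeodesic of $\mathbf P$ at $(t_0,q_0)$" means: $\mathbf P(s,t_0,q_0)=\mathbf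 r(s)$ for all $s$, $\partial_s\mathbf P,\partial_t\mathbf P,\partial_q\mathbf P$ are linearly independent at $(s,t_0,q_0)$, and $\mathbf N(s)$ is parallel to the normal $\partial_s\mathbf P\otimes\partial_t\mathbf P\otimes\partial_q\mathbf P$ (four-dimensional vector product) at $(s,t_0,q_0)$, for all $s$. *)

theory Defs
  imports "HOL-Analysis.Analysis"
begin

text \<open>Four-dimensional vector product a (x) b (x) c: the vector whose components are the
cofactors of the formal determinant with rows (e_1,...,e_4), a, b, c.
Equivalently, (a (x) b (x) c) . y = det[y; a; b; c] (up to the fixed index ordering of type 4,
which only affects the overall sign).\<close>
definition cross4 :: "real^4 \<Rightarrow> real^4 \<Rightarrow> real^4 \<Rightarrow> real^4" where
  "cross4 a b c = (\<chi> i. det (\<chi> j k. if j = 1 then (if k = i then 1 else 0)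
                                   else if j = 2 then a $ k
                                   else if j = 3 then b $ k
                                   else c $ k))"

definition lin_indep3 :: "real^4 \<Rightarrow> real^4 \<Rightarrow> real^4 \<Rightarrow> bool" where
  "lin_indep3 a b c \<longleftrightarrow>
     (\<forall>x y z. x *\<^sub>R a + y *\<^sub>R b + z *\<^sub>R c = 0 \<longrightarrow> x = 0 \<and> y = 0 \<and> z = 0)"

definition parallel :: "real^4 \<Rightarrow> real^4 \<Rightarrow> bool" where
  "parallel a b \<longleftrightarrow> (\<exists>c. a = c *\<^sub>R b) \<or> (\<exists>c. b = c *\<^sub>R a)"

definition C1_on :: "('a::real_normed_vector \<Rightarrow> 'b::real_normed_vector) \<Rightarrow> 'a set \<Rightarrow> bool" where
  "C1_on f S \<longleftrightarrow> (\<exists>f'. (\<forall>z\<in>S. (f has_derivative blinfun_apply (f' z)) (at z within S))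
                        \<and> continuous_on S f')"

definition isogeodesic ::
  "(real \<Rightarrow> real^4) \<Rightarrow> (real \<Rightarrow> real^4) \<Rightarrow> (real \<Rightarrow> real \<Rightarrow> real \<Rightarrow> real^4)
   \<Rightarrow> real \<Rightarrow> real \<Rightarrow> real \<Rightarrow> real \<Rightarrow> real \<Rightarrow> real \<Rightarrow> real \<Rightarrow> real \<Rightarrow> bool" where
  "isogeodesic r N P L1 L2 T1 T2 Q1 Q2 t0 q0 \<longleftrightarrow>
     (\<forall>s\<in>{L1..L2}.
        P s t0 q0 = r s \<and>
        (let Ps = vector_derivative (\<lambda>s'. P s' t0 q0) (at s within {L1..L2});
             Pt = vector_derivative (\<lambda>t. P s t q0) (at t0 within {T1..T2});
             Pq = vector_derivative (\<lambda>q. P s t0 q) (at q0 within {Q1..Q2})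
         in lin_indep3 Ps Pt Pq \<and> parallel (N s) (cross4 Ps Pt Pq)))"

end

theory Submission
  imports Defs
begin

text \<open>Because U, U', V, V' vanish at q0, the T- and N-components of the t- and q-derivatives
of P drop out at (s, t0, q0): P_t and P_q lie in the plane spanned by B1 and B2, while P_s = T once
P(s, t0, q0) = r(s), which in turn means that the B1- and B2-components of P vanish.
Then P_s, P_t, P_q are independent exactly when the 2x2 determinant of the B1, B2 coordinates
of P_t and P_q is nonzero, and in that case their vector product, being orthogonal to T, B1 and B2,
is a multiple of N.\<close>

lemma cross4_inner:
  "cross4 a b c \<bullet> y =
     det (\<chi> j. if j = 1 then y else if j = 2 then a else if j = 3 then b else c :: real^4^4)"
proof -
  let ?M = "\<lambda>z::real^4. (\<chi> j. if j = 1 then z else if j = 2 then a else if j = 3 then b else c) :: real^4^4"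
  have "det (?M y) = det (?M (\<Sum>i\<in>UNIV. y $ i *s axis i 1))"
    by (simp only: basis_expansion)
  also have "\<dots> = (\<Sum>i\<in>UNIV. det (?M (y $ i *s axis i 1)))"
    by (rule det_linear_row_sum) simp
  also have "\<dots> = (\<Sum>i\<in>UNIV. y $ i * det (?M (axis i 1)))"
    by (rule sum.cong[OF refl], rule det_row_mul)
  also have "\<dots> = (\<Sum>i\<in>UNIV. y $ i * cross4 a b c $ i)"
  proof -
    have "?M (axis i 1) = (\<chi> j k. if j = 1 then (if k = i then 1 else 0)
                                 else if j = 2 then a $ k else if j = 3 then b $ k else c $ k)" for i
      by (simp add: vec_eq_iff axis_def)
    then show ?thesis by (simp add: cross4_def)
  qed
  finally show ?thesis by (simp add: inner_vec_def mult.commute)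
qed

lemma cross4_orthogonal:
  "cross4 a b c \<bullet> a = 0" "cross4 a b c \<bullet> b = 0" "cross4 a b c \<bullet> c = 0"
  unfolding cross4_inner
  by (rule det_identical_rows[of 1 2] det_identical_rows[of 1 3] det_identical_rows[of 1 4];
      simp add: row_def vec_eq_iff)+

lemma orthogonal_to_maximal_orthogonal_set:
  fixes v :: "'a::euclidean_space"
  assumes "pairwise orthogonal B" "0 \<notin> B" "card B = DIM('a)"
    and "\<And>b. b \<in> B \<Longrightarrow> orthogonal v b"
  shows "v = 0"
proof (rule ccontr)
  assume "v \<noteq> 0"
  have "finite B" using assms(3) card.infinite by fastforce
  have "v \<notin> B" using \<open>v \<noteq> 0\<close> assms(4) orthogonal_self by blast
  have "pairwise orthogonal (insert v B)"
    using assms(1,4) by (auto simp: pairwise_insert orthogonal_commute)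
  then have "independent (insert v B)"
    using \<open>v \<noteq> 0\<close> assms(2) by (intro pairwise_orthogonal_independent) auto
  then have "card (insert v B) \<le> DIM('a)" using independent_bound by blast
  then show False using \<open>finite B\<close> \<open>v \<notin> B\<close> assms(3) by simp
qed

lemma orthonormal_frame_complement:
  fixes T N B1 B2 v :: "real^4"
  assumes "T \<bullet> T = 1" "N \<bullet> N = 1" "B1 \<bullet> B1 = 1" "B2 \<bullet> B2 = 1"
    "T \<bullet> N = 0" "T \<bullet> B1 = 0" "T \<bullet> B2 = 0" "N \<bullet> B1 = 0" "N \<bullet> B2 = 0" "B1 \<bullet> B2 = 0"
    and "v \<bullet> T = 0" "v \<bullet> B1 = 0" "v \<bullet> B2 = 0"
  shows "v = (v \<bullet> N) *\<^sub>R N"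
proof -
  let ?F = "{T, N, B1, B2}"
  have "distinct [T, N, B1, B2]"
    using assms(1-10) by (auto simp: inner_commute)
  then have "card ?F = 4"
    using distinct_card by fastforce
  moreover have "pairwise orthogonal ?F"
    using assms(1-10) by (auto simp: pairwise_insert orthogonal_def inner_commute)
  moreover have "0 \<notin> ?F" using assms(1-4) by auto
  moreover have "orthogonal (v - (v \<bullet> N) *\<^sub>R N) b" if "b \<in> ?F" for b
  proof -
    have "N \<bullet> T = 0" "N \<bullet> B1 = 0" "N \<bullet> B2 = 0"
      using assms(5,8,9) by (simp_all add: inner_commute)
    then show ?thesis
      using that assms by (auto simp: orthogonal_def inner_diff_left)
  qed
  ultimately have "v - (v \<bullet> N) *\<^sub>R N = 0"
    by (intro orthogonal_to_maximal_orthogonal_set[of ?F]) auto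
  then show ?thesis by simp
qed

lemma trivial_kernel_2x2_iff_det_ne_0:
  fixes a b c d :: real
  shows "(\<forall>y z. a * y + c * z = 0 \<and> b * y + d * z = 0 \<longrightarrow> y = 0 \<and> z = 0) \<longleftrightarrow> a * d - b * c \<noteq> 0"
proof
  assume uniq: "\<forall>y z. a * y + c * z = 0 \<and> b * y + d * z = 0 \<longrightarrow> y = 0 \<and> z = 0"
  show "a * d - b * c \<noteq> 0"
  proof
    assume "a * d - b * c = 0"
    then have "(d, - b) = (0, 0) \<and> (c, - a) = (0, 0)"
      using uniq[rule_format, of d "- b"] uniq[rule_format, of c "- a"]
      by (auto simp: algebra_simps)
    then show False using uniq[rule_format, of 1 0] by simp
  qed
next
  assume D: "a * d - b * c \<noteq> 0"
  show "\<forall>y z. a * y + c * z = 0 \<and> b * y + d * z = 0 \<longrightarrow> y = 0 \<and> z = 0"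
  proof (intro allI impI)
    fix y z assume eqs: "a * y + c * z = 0 \<and> b * y + d * z = 0"
    have "(a * d - b * c) * y = d * (a * y + c * z) - c * (b * y + d * z)"
         "(a * d - b * c) * z = a * (b * y + d * z) - b * (a * y + c * z)"
      by (simp_all add: algebra_simps)
    then have "(a * d - b * c) * y = 0" "(a * d - b * c) * z = 0"
      using eqs by simp_all
    then show "y = 0 \<and> z = 0" using D by simp
  qed
qed

lemma unit_scaleR_add_orthogonal_eq_0_iff:
  fixes e v :: "'a::real_inner"
  assumes "e \<bullet> e = 1" "e \<bullet> v = 0"
  shows "x *\<^sub>R e + v = 0 \<longleftrightarrow> x = 0 \<and> v = 0"
proof
  assume sum_0: "x *\<^sub>R e + v = 0"
  have "x = e \<bullet> (x *\<^sub>R e + v)" using assms by (simp add: inner_add_right)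
  then have "x = 0" by (simp add: sum_0)
  with sum_0 show "x = 0 \<and> v = 0" by simp
qed simp

lemma orthonormal2_combination_eq_0_iff:
  fixes e1 e2 :: "'a::real_inner"
  assumes "e1 \<bullet> e1 = 1" "e2 \<bullet> e2 = 1" "e1 \<bullet> e2 = 0"
  shows "y *\<^sub>R e1 + z *\<^sub>R e2 = 0 \<longleftrightarrow> y = 0 \<and> z = 0"
  using unit_scaleR_add_orthogonal_eq_0_iff[of e1 "z *\<^sub>R e2" y]
    unit_scaleR_add_orthogonal_eq_0_iff[of e2 0 z] assms
  by simp

lemma lin_indep3_frame_iff:
  fixes T B1 B2 :: "real^4"
  assumes "T \<bullet> T = 1" "B1 \<bullet> B1 = 1" "B2 \<bullet> B2 = 1" "T \<bullet> B1 = 0" "T \<bullet> B2 = 0" "B1 \<bullet> B2 = 0"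
  shows "lin_indep3 T (a *\<^sub>R B1 + b *\<^sub>R B2) (c *\<^sub>R B1 + d *\<^sub>R B2) \<longleftrightarrow> a * d - b * c \<noteq> 0"
proof -
  have "x *\<^sub>R T + y *\<^sub>R (a *\<^sub>R B1 + b *\<^sub>R B2) + z *\<^sub>R (c *\<^sub>R B1 + d *\<^sub>R B2) = 0
        \<longleftrightarrow> x = 0 \<and> a * y + c * z = 0 \<and> b * y + d * z = 0" for x y z
  proof -
    have "x *\<^sub>R T + y *\<^sub>R (a *\<^sub>R B1 + b *\<^sub>R B2) + z *\<^sub>R (c *\<^sub>R B1 + d *\<^sub>R B2)
          = x *\<^sub>R T + ((a * y + c * z) *\<^sub>R B1 + (b * y + d * z) *\<^sub>R B2)"
      by (simp add: algebra_simps)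
    moreover have "T \<bullet> ((a * y + c * z) *\<^sub>R B1 + (b * y + d * z) *\<^sub>R B2) = 0"
      using assms by (simp add: inner_add_right)
    ultimately show ?thesis
      by (simp only: unit_scaleR_add_orthogonal_eq_0_iff[OF assms(1)]
          orthonormal2_combination_eq_0_iff[OF assms(2,3,6)])
  qed
  then have "lin_indep3 T (a *\<^sub>R B1 + b *\<^sub>R B2) (c *\<^sub>R B1 + d *\<^sub>R B2)
        \<longleftrightarrow> (\<forall>y z. a * y + c * z = 0 \<and> b * y + d * z = 0 \<longrightarrow> y = 0 \<and> z = 0)"
    unfolding lin_indep3_def by blast
  then show ?thesis by (simp only: trivial_kernel_2x2_iff_det_ne_0)
qed

lemma lin_indep3_parallel_cross4_frame_iff:
  fixes T N B1 B2 :: "real^4" and a b c d :: real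
  assumes frame: "T \<bullet> T = 1" "N \<bullet> N = 1" "B1 \<bullet> B1 = 1" "B2 \<bullet> B2 = 1"
    "T \<bullet> N = 0" "T \<bullet> B1 = 0" "T \<bullet> B2 = 0" "N \<bullet> B1 = 0" "N \<bullet> B2 = 0" "B1 \<bullet> B2 = 0"
  defines "u \<equiv> a *\<^sub>R B1 + b *\<^sub>R B2" and "w \<equiv> c *\<^sub>R B1 + d *\<^sub>R B2"
  shows "lin_indep3 T u w \<and> parallel N (cross4 T u w) \<longleftrightarrow> a * d - b * c \<noteq> 0"
proof -
  have "lin_indep3 T u w \<longleftrightarrow> a * d - b * c \<noteq> 0"
    unfolding u_def w_def using frame(1,3,4,6,7,10) by (rule lin_indep3_frame_iff)
  moreover have "parallel N (cross4 T u w)" if D: "a * d - b * c \<noteq> 0"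
  proof -
    let ?v = "cross4 T u w"
    have "a * (?v \<bullet> B1) + b * (?v \<bullet> B2) = 0" "c * (?v \<bullet> B1) + d * (?v \<bullet> B2) = 0"
      using cross4_orthogonal(2,3)[of T u w] by (simp_all add: u_def w_def inner_add_right)
    moreover have "a * d - c * b \<noteq> 0" using D by (simp add: mult.commute)
    ultimately have "?v \<bullet> B1 = 0 \<and> ?v \<bullet> B2 = 0"
      using trivial_kernel_2x2_iff_det_ne_0[of a b c d] by blast
    then have "?v = (?v \<bullet> N) *\<^sub>R N"
      using cross4_orthogonal(1)[of T u w] by (intro orthonormal_frame_complement[OF frame]) auto
    then show ?thesis unfolding parallel_def by blast
  qed
  ultimately show ?thesis by blast
qed

lemma C1_on_has_vector_derivative:
  fixes f :: "real \<Rightarrow> 'b::real_normed_vector"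
  assumes "C1_on f S" "x \<in> S"
  shows "(f has_vector_derivative vector_derivative f (at x within S)) (at x within S)"
  using assms unfolding C1_on_def by (metis differentiable_def vector_derivative_works)

lemma C1_on_has_vector_derivative_snd:
  fixes f :: "real \<times> real \<Rightarrow> 'b::real_normed_vector"
  assumes "C1_on f (A \<times> B)" "s \<in> A" "t \<in> B"
  shows "((\<lambda>t. f (s, t)) has_vector_derivative vector_derivative (\<lambda>t. f (s, t)) (at t within B))
           (at t within B)"
proof -
  obtain D where "(f has_derivative D) (at (s, t) within A \<times> B)"
    using assms unfolding C1_on_def by blast
  then have "(f has_derivative D) (at (s, t) within Pair s ` B)"
    by (rule has_derivative_subset) (use assms(2) in auto)
  moreover have "(Pair s has_derivative Pair 0) (at t within B)"
    by (auto intro!: derivative_eq_intros)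
  ultimately have "(\<lambda>t. f (s, t)) differentiable (at t within B)"
    using diff_chain_within unfolding differentiable_def o_def by blast
  then show ?thesis unfolding vector_derivative_works .
qed

lemma vector_derivative_within_Icc:
  fixes f :: "real \<Rightarrow> 'b::real_normed_vector"
  assumes "a < b" "x \<in> {a..b}" "(f has_vector_derivative f') (at x within {a..b})"
  shows "vector_derivative f (at x within {a..b}) = f'"
  using vector_derivative_within_cbox[of a b x f f'] assms by (simp add: cbox_interval)

lemma vector_derivative_within_Icc_transform:
  fixes f g :: "real \<Rightarrow> 'b::real_normed_vector"
  assumes "a < b" "x \<in> {a..b}" "\<forall>y\<in>{a..b}. g y = f y"
    and "(f has_vector_derivative f') (at x within {a..b})"
  shows "vector_derivative g (at x within {a..b}) = f'"
  using assms by (intro vector_derivative_within_Icc has_vector_derivative_transform[of x _ g f]) auto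

definition frame_surface ::
  "(real \<Rightarrow> 'a::real_normed_vector) \<Rightarrow> (real \<Rightarrow> 'a) \<Rightarrow> (real \<Rightarrow> 'a) \<Rightarrow> (real \<Rightarrow> 'a) \<Rightarrow> (real \<Rightarrow> 'a)
   \<Rightarrow> (real \<times> real \<Rightarrow> real) \<Rightarrow> (real \<times> real \<Rightarrow> real) \<Rightarrow> (real \<times> real \<Rightarrow> real) \<Rightarrow> (real \<times> real \<Rightarrow> real)
   \<Rightarrow> (real \<Rightarrow> real) \<Rightarrow> (real \<Rightarrow> real) \<Rightarrow> (real \<Rightarrow> real) \<Rightarrow> (real \<Rightarrow> real)
   \<Rightarrow> real \<Rightarrow> real \<Rightarrow> real \<Rightarrow> 'a" where
  "frame_surface r T N B1 B2 l m n p U V W X =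
     (\<lambda>s t q. r s + (l (s, t) * U q) *\<^sub>R T s + (m (s, t) * V q) *\<^sub>R N s
                  + (n (s, t) * W q) *\<^sub>R B1 s + (p (s, t) * X q) *\<^sub>R B2 s)"

lemma frame_surface_eq_curve_iff:
  fixes B1 B2 :: "real \<Rightarrow> 'a::real_inner"
  assumes "U q = 0" "V q = 0" "B1 s \<bullet> B1 s = 1" "B2 s \<bullet> B2 s = 1" "B1 s \<bullet> B2 s = 0"
  shows "frame_surface r T N B1 B2 l m n p U V W X s t q = r s
           \<longleftrightarrow> n (s, t) * W q = 0 \<and> p (s, t) * X q = 0"
  using assms orthonormal2_combination_eq_0_iff[of "B1 s" "B2 s"]
  by (simp add: frame_surface_def add.assoc)

lemma frame_surface_partial_t:
  assumes "T1 < T2" "t \<in> {T1..T2}" "s \<in> A" "C1_on n (A \<times> {T1..T2})" "C1_on p (A \<times> {T1..T2})"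
    and "U q = 0" "V q = 0"
  shows "vector_derivative (\<lambda>t. frame_surface r T N B1 B2 l m n p U V W X s t q) (at t within {T1..T2})
    = (vector_derivative (\<lambda>t. n (s, t)) (at t within {T1..T2}) * W q) *\<^sub>R B1 s
      + (vector_derivative (\<lambda>t. p (s, t)) (at t within {T1..T2}) * X q) *\<^sub>R B2 s"
proof (rule vector_derivative_within_Icc[OF assms(1,2)])
  have "((\<lambda>t. n (s, t)) has_real_derivative vector_derivative (\<lambda>t. n (s, t)) (at t within {T1..T2}))
          (at t within {T1..T2})"
       "((\<lambda>t. p (s, t)) has_real_derivative vector_derivative (\<lambda>t. p (s, t)) (at t within {T1..T2}))
          (at t within {T1..T2})"
    unfolding has_real_derivative_iff_has_vector_derivative
    using assms(2-5) by (auto intro: C1_on_has_vector_derivative_snd)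
  then show "((\<lambda>t. frame_surface r T N B1 B2 l m n p U V W X s t q) has_vector_derivative
      (vector_derivative (\<lambda>t. n (s, t)) (at t within {T1..T2}) * W q) *\<^sub>R B1 s
      + (vector_derivative (\<lambda>t. p (s, t)) (at t within {T1..T2}) * X q) *\<^sub>R B2 s) (at t within {T1..T2})"
    by (simp add: frame_surface_def assms(6,7)) (auto intro!: derivative_eq_intros)
qed

lemma frame_surface_partial_q:
  assumes "Q1 < Q2" "q \<in> {Q1..Q2}"
    and "C1_on U {Q1..Q2}" "C1_on V {Q1..Q2}" "C1_on W {Q1..Q2}" "C1_on X {Q1..Q2}"
    and "vector_derivative U (at q within {Q1..Q2}) = 0" "vector_derivative V (at q within {Q1..Q2}) = 0"
  shows "vector_derivative (\<lambda>q. frame_surface r T N B1 B2 l m n p U V W X s t q) (at q within {Q1..Q2})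
    = (n (s, t) * vector_derivative W (at q within {Q1..Q2})) *\<^sub>R B1 s
      + (p (s, t) * vector_derivative X (at q within {Q1..Q2})) *\<^sub>R B2 s"
proof (rule vector_derivative_within_Icc[OF assms(1,2)])
  have "(F has_real_derivative vector_derivative F (at q within {Q1..Q2})) (at q within {Q1..Q2})"
    if "F \<in> {U, V, W, X}" for F
    unfolding has_real_derivative_iff_has_vector_derivative
    using that assms(2-6) by (auto intro: C1_on_has_vector_derivative)
  then show "((\<lambda>q. frame_surface r T N B1 B2 l m n p U V W X s t q) has_vector_derivative
      (n (s, t) * vector_derivative W (at q within {Q1..Q2})) *\<^sub>R B1 s
      + (p (s, t) * vector_derivative X (at q within {Q1..Q2})) *\<^sub>R B2 s) (at q within {Q1..Q2})"
    unfolding frame_surface_def using assms(7,8)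
    by (auto intro!: derivative_eq_intros simp: mult.commute)
qed

theorem mainTheorem3:
  fixes r T N B1 B2 :: "real \<Rightarrow> real^4"
    and k1 k2 k3 :: "real \<Rightarrow> real"
    and l m n p :: "real \<times> real \<Rightarrow> real"
    and U V W X :: "real \<Rightarrow> real"
    and L1 L2 T1 T2 Q1 Q2 t0 q0 :: real
  assumes intervals: "L1 < L2" "T1 < T2" "Q1 < Q2"
    and t0: "t0 \<in> {T1..T2}" and q0: "q0 \<in> {Q1..Q2}"
    and orthonormal: "\<forall>s\<in>{L1..L2}.
          T s \<bullet> T s = 1 \<and> N s \<bullet> N s = 1 \<and> B1 s \<bullet> B1 s = 1 \<and> B2 s \<bullet> B2 s = 1 \<and>
          T s \<bullet> N s = 0 \<and> T s \<bullet> B1 s = 0 \<and> T s \<bullet> B2 s = 0 \<and>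
          N s \<bullet> B1 s = 0 \<and> N s \<bullet> B2 s = 0 \<and> B1 s \<bullet> B2 s = 0"
    and frenet: "\<forall>s\<in>{L1..L2}.
          (r has_vector_derivative T s) (at s within {L1..L2}) \<and>
          (T has_vector_derivative (k1 s *\<^sub>R N s)) (at s within {L1..L2}) \<and>
          (N has_vector_derivative (- k1 s *\<^sub>R T s + k2 s *\<^sub>R B1 s)) (at s within {L1..L2}) \<and>
          (B1 has_vector_derivative (- k2 s *\<^sub>R N s + k3 s *\<^sub>R B2 s)) (at s within {L1..L2}) \<and>
          (B2 has_vector_derivative (- k3 s *\<^sub>R B1 s)) (at s within {L1..L2})"
    and k1_pos: "\<forall>s\<in>{L1..L2}. k1 s > 0"
    and C1_lmnp: "C1_on l ({L1..L2} \<times> {T1..T2})" "C1_on m ({L1..L2} \<times> {T1..T2})"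
                 "C1_on n ({L1..L2} \<times> {T1..T2})" "C1_on p ({L1..L2} \<times> {T1..T2})"
    and C1_UVWX: "C1_on U {Q1..Q2}" "C1_on V {Q1..Q2}" "C1_on W {Q1..Q2}" "C1_on X {Q1..Q2}"
    and U0: "U q0 = 0" "vector_derivative U (at q0 within {Q1..Q2}) = 0"
    and V0: "V q0 = 0" "vector_derivative V (at q0 within {Q1..Q2}) = 0"
  shows "isogeodesic r N
           (\<lambda>s t q. r s + (l (s, t) * U q) *\<^sub>R T s + (m (s, t) * V q) *\<^sub>R N s
                        + (n (s, t) * W q) *\<^sub>R B1 s + (p (s, t) * X q) *\<^sub>R B2 s)
           L1 L2 T1 T2 Q1 Q2 t0 q0
         \<longleftrightarrow>
         (\<forall>s\<in>{L1..L2}.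
            n (s, t0) * W q0 = 0 \<and> p (s, t0) * X q0 = 0 \<and>
            vector_derivative (\<lambda>t. n (s, t)) (at t0 within {T1..T2}) * W q0 * p (s, t0)
              * vector_derivative X (at q0 within {Q1..Q2})
            - n (s, t0) * vector_derivative W (at q0 within {Q1..Q2})
              * vector_derivative (\<lambda>t. p (s, t)) (at t0 within {T1..T2}) * X q0 \<noteq> 0)"
proof -
  let ?I = "{L1..L2}" and ?J = "{T1..T2}" and ?K = "{Q1..Q2}"
  let ?P = "frame_surface r T N B1 B2 l m n p U V W X"
  let ?Ps = "\<lambda>s. vector_derivative (\<lambda>s'. ?P s' t0 q0) (at s within ?I)"
    and ?Pt = "\<lambda>s. vector_derivative (\<lambda>t. ?P s t q0) (at t0 within ?J)"
    and ?Pq = "\<lambda>s. vector_derivative (\<lambda>q. ?P s t0 q) (at q0 within ?K)"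
  have on_curve: "?P s t0 q0 = r s \<longleftrightarrow> n (s, t0) * W q0 = 0 \<and> p (s, t0) * X q0 = 0"
    if "s \<in> ?I" for s
    using that orthonormal U0(1) V0(1) by (intro frame_surface_eq_curve_iff) auto
  have pointwise: "?P s t0 q0 = r s \<and> lin_indep3 (?Ps s) (?Pt s) (?Pq s)
        \<and> parallel (N s) (cross4 (?Ps s) (?Pt s) (?Pq s))
      \<longleftrightarrow> n (s, t0) * W q0 = 0 \<and> p (s, t0) * X q0 = 0 \<and>
        vector_derivative (\<lambda>t. n (s, t)) (at t0 within ?J) * W q0 * p (s, t0)
          * vector_derivative X (at q0 within ?K)
        - n (s, t0) * vector_derivative W (at q0 within ?K)
          * vector_derivative (\<lambda>t. p (s, t)) (at t0 within ?J) * X q0 \<noteq> 0"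
    if s: "s \<in> ?I" and curve: "\<forall>s\<in>?I. ?P s t0 q0 = r s" for s
  proof -
    have "?Ps s = T s"
      using intervals(1) s curve frenet by (intro vector_derivative_within_Icc_transform) auto
    moreover have "lin_indep3 (T s) (a *\<^sub>R B1 s + b *\<^sub>R B2 s) (c *\<^sub>R B1 s + d *\<^sub>R B2 s)
        \<and> parallel (N s) (cross4 (T s) (a *\<^sub>R B1 s + b *\<^sub>R B2 s) (c *\<^sub>R B1 s + d *\<^sub>R B2 s))
        \<longleftrightarrow> a * d - b * c \<noteq> 0" for a b c d
      using orthonormal s by (intro lin_indep3_parallel_cross4_frame_iff) auto
    ultimately show ?thesis
      unfolding frame_surface_partial_t[where U = U and V = V, OF intervals(2) t0 s C1_lmnp(3,4) U0(1) V0(1)]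
        frame_surface_partial_q[OF intervals(3) q0 C1_UVWX U0(2) V0(2)] on_curve[OF s]
      by (simp add: mult_ac)
  qed
  show ?thesis
    unfolding frame_surface_def[symmetric] isogeodesic_def Let_def using pointwise on_curve by blast
qed

end
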